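(* Let $\Omega\subseteq\mathbb{R}^2$ be open and connected. Let $R\in C^2(\Omega;SO(2))$ and $\alpha\in\mathbb{R}^2$ be such that $\operatorname{curl} R=\alpha$ in $\Omega$. Then $R$ is constant.
   Context: $SO(2)$ is the group of $2\times2$ rotation matrices. For a vector field $f=(f_1,f_2)$ on a subset of $\mathbb{R}^2$, $\operatorname{curl} f=\partial_1 f_2-\partial_2 f_1$; for a matrix field $R$, $\operatorname{curl}R\in\mathbb{R}^2$ is obtained by applying $\operatorname{curl}$ to each row, i.e. $(\operatorname{curl}R)_i=\partial_1R_{i2}-\partial_2R_{i1}$. *)

theory Defs
  imports "HOL-Analysis.Analysis"
begin

definition partial_deriv :: "2 \<Rightarrow> (real^2 \<Rightarrow> 'b::real_normed_vector) \<Rightarrow> real^2 \<Rightarrow> 'b" where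
  "partial_deriv j f x = vector_derivative (\<lambda>t. f (x + t *\<^sub>R axis j 1)) (at 0)"

definition curl_mat :: "(real^2 \<Rightarrow> real^2^2) \<Rightarrow> real^2 \<Rightarrow> real^2" where
  "curl_mat R x = (\<chi> i. partial_deriv 1 (\<lambda>y. R y $ i $ 2) x - partial_deriv 2 (\<lambda>y. R y $ i $ 1) x)"

definition C2_on :: "(real^2) set \<Rightarrow> (real^2 \<Rightarrow> 'b::real_normed_vector) \<Rightarrow> bool" where
  "C2_on S f \<longleftrightarrow> (\<exists>(f' :: real^2 \<Rightarrow> ((real^2) \<Rightarrow>\<^sub>L 'b)) (f'' :: real^2 \<Rightarrow> ((real^2) \<Rightarrow>\<^sub>L ((real^2) \<Rightarrow>\<^sub>L 'b))).
      (\<forall>x\<in>S. (f has_derivative blinfun_apply (f' x)) (at x)) \<and>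
      (\<forall>x\<in>S. (f' has_derivative blinfun_apply (f'' x)) (at x)) \<and>
      continuous_on S f'')"

end

theory Submission
  imports Defs
begin

(* Write R = [[a, -b], [b, a]] with a^2 + b^2 = 1 and curl R = (p, q).  Differentiating
   a^2 + b^2 = 1 and inserting the two curl equations determines the gradient of (a, b)
   pointwise: in direction e_i the unit vector (a, b) turns with angular velocity w_i, where
   w = (-(a p + b q), b p - a q).  Equality of the mixed partials of a and b (Schwarz) forces
   d_2 w_1 = d_1 w_2, whereas the gradient formulas give d_2 w_1 - d_1 w_2 = |w|^2 = p^2 + q^2.
   Hence curl R = 0, the gradient of R vanishes and R is constant on the connected set.
   Only first derivatives of R enter: the second derivatives that Schwarz's theorem needs
   come from the gradient formulas, and Schwarz's theorem holds as soon as the directional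
   derivatives are differentiable at the point in question. *)

definition second_difference :: "('a::real_normed_vector \<Rightarrow> real) \<Rightarrow> 'a \<Rightarrow> 'a \<Rightarrow> 'a \<Rightarrow> real \<Rightarrow> real"
  where "second_difference f x u v h = f (x + h *\<^sub>R u + h *\<^sub>R v) - f (x + h *\<^sub>R u) - f (x + h *\<^sub>R v) + f x"

lemma second_difference_commute: "second_difference f x u v h = second_difference f x v u h"
  by (simp add: second_difference_def algebra_simps)

lemma second_difference_mean_value:
  fixes f :: "'a::real_normed_vector \<Rightarrow> real"
  assumes f: "\<And>y. y \<in> S \<Longrightarrow> (f has_derivative D y) (at y)"
    and "0 < h"
    and segments: "\<And>t. 0 \<le> t \<Longrightarrow> t \<le> h \<Longrightarrow> x + t *\<^sub>R u \<in> S \<and> x + t *\<^sub>R u + h *\<^sub>R v \<in> S"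
  obtains \<xi> where "0 < \<xi>" "\<xi> < h"
    "second_difference f x u v h = h * (D (x + \<xi> *\<^sub>R u + h *\<^sub>R v) u - D (x + \<xi> *\<^sub>R u) u)"
proof -
  define g where "g t = f (x + t *\<^sub>R u + h *\<^sub>R v) - f (x + t *\<^sub>R u)" for t
  have g_deriv: "(g has_derivative (\<lambda>s. D (x + t *\<^sub>R u + h *\<^sub>R v) (s *\<^sub>R u) - D (x + t *\<^sub>R u) (s *\<^sub>R u)))
      (at t within {0..h})" if "0 \<le> t" "t \<le> h" for t
  proof -
    have line1: "((\<lambda>t. x + t *\<^sub>R u + h *\<^sub>R v) has_derivative (\<lambda>s. s *\<^sub>R u)) (at t within {0..h})"
      and line2: "((\<lambda>t. x + t *\<^sub>R u) has_derivative (\<lambda>s. s *\<^sub>R u)) (at t within {0..h})"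
      by (auto intro!: derivative_eq_intros)
    have "(f has_derivative D (x + t *\<^sub>R u + h *\<^sub>R v)) (at (x + t *\<^sub>R u + h *\<^sub>R v))"
      and "(f has_derivative D (x + t *\<^sub>R u)) (at (x + t *\<^sub>R u))"
      using segments[OF that] by (auto intro: f)
    from has_derivative_compose[OF line1 this(1)] has_derivative_compose[OF line2 this(2)]
    show ?thesis
      unfolding g_def by (rule has_derivative_diff)
  qed
  obtain \<xi> where \<xi>: "0 < \<xi>" "\<xi> < h"
    and mvt: "g h - g 0 = D (x + \<xi> *\<^sub>R u + h *\<^sub>R v) (h *\<^sub>R u) - D (x + \<xi> *\<^sub>R u) (h *\<^sub>R u)"
    using mvt_simple[OF \<open>0 < h\<close> g_deriv] by auto
  have "linear (D (x + \<xi> *\<^sub>R u + h *\<^sub>R v))" "linear (D (x + \<xi> *\<^sub>R u))"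
    using \<xi> segments[of \<xi>] f by (auto intro: has_derivative_linear)
  then have "g h - g 0 = h * (D (x + \<xi> *\<^sub>R u + h *\<^sub>R v) u - D (x + \<xi> *\<^sub>R u) u)"
    by (simp add: mvt linear_scale right_diff_distrib)
  with \<xi> show thesis
    by (intro that[of \<xi>]) (auto simp: g_def second_difference_def)
qed

lemma norm_scaleR_add_le:
  assumes "0 \<le> t" "t \<le> h" "0 \<le> s" "s \<le> h"
  shows "norm (t *\<^sub>R u + s *\<^sub>R v) \<le> h * (norm u + norm v)"
proof -
  have "norm (t *\<^sub>R u + s *\<^sub>R v) \<le> t * norm u + s * norm v"
    using assms norm_triangle_ineq[of "t *\<^sub>R u" "s *\<^sub>R v"] by simp
  also have "\<dots> \<le> h * (norm u + norm v)"
    unfolding distrib_left using assms by (intro add_mono mult_right_mono) auto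
  finally show ?thesis .
qed

lemma second_difference_estimate:
  fixes f :: "'a::real_normed_vector \<Rightarrow> real"
  assumes f: "\<And>y. y \<in> S \<Longrightarrow> (f has_derivative D y) (at y)"
    and "linear E" and ball: "ball x \<rho> \<subseteq> S"
    and "0 \<le> \<epsilon>"
    and remainder: "\<And>y. y \<in> ball x \<rho> \<Longrightarrow> \<bar>D y u - D x u - E (y - x)\<bar> \<le> \<epsilon> * norm (y - x)"
    and "0 < h" and small: "h * (norm u + norm v) < \<rho>"
  shows "\<bar>second_difference f x u v h / h\<^sup>2 - E v\<bar> \<le> 2 * \<epsilon> * (norm u + norm v)"
proof -
  define \<phi> where "\<phi> y = D y u - D x u - E (y - x)" for y
  have near: "x + t *\<^sub>R u + s *\<^sub>R v \<in> ball x \<rho> \<and>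
      norm (x + t *\<^sub>R u + s *\<^sub>R v - x) \<le> h * (norm u + norm v)"
    if "0 \<le> t" "t \<le> h" "0 \<le> s" "s \<le> h" for t s
    using norm_scaleR_add_le[OF that, of u v] small
    by (simp add: dist_norm norm_minus_commute add.commute add.left_commute)
  then have "x + t *\<^sub>R u \<in> S \<and> x + t *\<^sub>R u + h *\<^sub>R v \<in> S" if "0 \<le> t" "t \<le> h" for t
    using near[of t 0] near[of t h] that \<open>0 < h\<close> ball by auto
  then obtain \<xi> where "0 < \<xi>" "\<xi> < h"
    and mv: "second_difference f x u v h = h * (D (x + \<xi> *\<^sub>R u + h *\<^sub>R v) u - D (x + \<xi> *\<^sub>R u) u)"
    using second_difference_mean_value[OF f \<open>0 < h\<close>] by blast
  define y1 where "y1 = x + \<xi> *\<^sub>R u + h *\<^sub>R v"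
  \<comment> \<open>the summand \<open>0 *\<^sub>R v\<close> lets one bound below cover both \<open>y1\<close> and \<open>y2\<close>\<close>
  define y2 where "y2 = x + \<xi> *\<^sub>R u + 0 *\<^sub>R v"
  have "E (y1 - x) - E (y2 - x) = h * E v"
    by (simp add: y1_def y2_def linear_add[OF \<open>linear E\<close>] linear_scale[OF \<open>linear E\<close>])
  then have "(\<phi> y1 - \<phi> y2) / h = (D y1 u - D y2 u) / h - E v"
    using \<open>0 < h\<close> by (simp add: \<phi>_def field_simps)
  moreover have "second_difference f x u v h / h\<^sup>2 = (D y1 u - D y2 u) / h"
    using mv \<open>0 < h\<close> by (simp add: y1_def y2_def power2_eq_square)
  ultimately have "second_difference f x u v h / h\<^sup>2 - E v = (\<phi> y1 - \<phi> y2) / h"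
    by simp
  then have "\<bar>second_difference f x u v h / h\<^sup>2 - E v\<bar> = \<bar>\<phi> y1 - \<phi> y2\<bar> / h"
    using \<open>0 < h\<close> by simp
  also have "\<dots> \<le> 2 * (\<epsilon> * (h * (norm u + norm v))) / h"
  proof (rule divide_right_mono)
    have "\<bar>\<phi> y\<bar> \<le> \<epsilon> * (h * (norm u + norm v))" if "y = x + \<xi> *\<^sub>R u + s *\<^sub>R v" "0 \<le> s" "s \<le> h" for y s
    proof -
      have "y \<in> ball x \<rho>"
        using near[of \<xi> s] that \<open>0 < \<xi>\<close> \<open>\<xi> < h\<close> by simp
      then have "\<bar>\<phi> y\<bar> \<le> \<epsilon> * norm (y - x)"
        unfolding \<phi>_def by (rule remainder)
      also have "\<dots> \<le> \<epsilon> * (h * (norm u + norm v))"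
        using near[of \<xi> s] that \<open>0 < \<xi>\<close> \<open>\<xi> < h\<close> \<open>0 \<le> \<epsilon>\<close> by (simp add: mult_left_mono)
      finally show ?thesis .
    qed
    from this[OF y1_def] this[OF y2_def] \<open>0 < h\<close>
    show "\<bar>\<phi> y1 - \<phi> y2\<bar> \<le> 2 * (\<epsilon> * (h * (norm u + norm v)))"
      by linarith
  qed (use \<open>0 < h\<close> in simp)
  also have "\<dots> = 2 * \<epsilon> * (norm u + norm v)"
    using \<open>0 < h\<close> by simp
  finally show ?thesis .
qed

lemma second_difference_tendsto:
  fixes f :: "'a::real_normed_vector \<Rightarrow> real"
  assumes "open S" "x \<in> S"
    and f: "\<And>y. y \<in> S \<Longrightarrow> (f has_derivative D y) (at y)"
    and E: "((\<lambda>y. D y u) has_derivative E) (at x)"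
  shows "((\<lambda>h. second_difference f x u v h / h\<^sup>2) \<longlongrightarrow> E v) (at_right 0)"
  unfolding tendsto_iff eventually_at_right_field dist_real_def
proof (intro allI impI)
  fix e :: real
  assume "e > 0"
  define c where "c = norm u + norm v"
  define \<epsilon> where "\<epsilon> = e / (2 * c + 1)"
  have "c \<ge> 0" by (simp add: c_def)
  then have "\<epsilon> > 0" "2 * \<epsilon> * c < e"
    using \<open>e > 0\<close> by (simp_all add: \<epsilon>_def field_simps)
  obtain \<delta> where "\<delta> > 0"
    and \<delta>: "\<And>y. norm (y - x) < \<delta> \<Longrightarrow> \<bar>D y u - D x u - E (y - x)\<bar> \<le> \<epsilon> * norm (y - x)"
    using E \<open>\<epsilon> > 0\<close> unfolding has_derivative_at_alt real_norm_def by blast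
  obtain r where "r > 0" and "ball x r \<subseteq> S"
    using assms(1,2) open_contains_ball by blast
  define \<rho> where "\<rho> = min \<delta> r"
  have "ball x \<rho> \<subseteq> S" "\<rho> > 0"
    using \<open>ball x r \<subseteq> S\<close> \<open>\<delta> > 0\<close> \<open>r > 0\<close> by (auto simp: \<rho>_def)
  have remainder: "\<bar>D y u - D x u - E (y - x)\<bar> \<le> \<epsilon> * norm (y - x)" if "y \<in> ball x \<rho>" for y
    using \<delta>[of y] that by (simp add: \<rho>_def dist_norm norm_minus_commute)
  have estimate: "\<bar>second_difference f x u v h / h\<^sup>2 - E v\<bar> \<le> 2 * \<epsilon> * c"
    if "0 < h" "h * c < \<rho>" for h
    using that \<open>\<epsilon> > 0\<close> \<open>ball x \<rho> \<subseteq> S\<close> unfolding c_def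
    by (intro second_difference_estimate[where S = S and D = D])
      (auto intro: f remainder has_derivative_linear[OF E])
  show "\<exists>b>0. \<forall>h>0. h < b \<longrightarrow> \<bar>second_difference f x u v h / h\<^sup>2 - E v\<bar> < e"
  proof (intro exI[of _ "\<rho> / (c + 1)"] conjI allI impI)
    show "\<rho> / (c + 1) > 0"
      using \<open>\<rho> > 0\<close> \<open>c \<ge> 0\<close> by simp
    fix h :: real
    assume "0 < h" "h < \<rho> / (c + 1)"
    then have "h * c < \<rho>"
      using \<open>c \<ge> 0\<close> by (simp add: less_divide_eq) (smt (verit) mult_left_mono)
    with estimate[OF \<open>0 < h\<close>] \<open>2 * \<epsilon> * c < e\<close>
    show "\<bar>second_difference f x u v h / h\<^sup>2 - E v\<bar> < e"
      by linarith
  qed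
qed

lemma second_derivative_symmetric:
  fixes f :: "'a::real_normed_vector \<Rightarrow> real"
  assumes "open S" "x \<in> S"
    and f: "\<And>y. y \<in> S \<Longrightarrow> (f has_derivative D y) (at y)"
    and "((\<lambda>y. D y u) has_derivative Eu) (at x)"
    and "((\<lambda>y. D y v) has_derivative Ev) (at x)"
  shows "Eu v = Ev u"
  using second_difference_tendsto[OF assms(1,2) f assms(4), of v]
    second_difference_tendsto[OF assms(1,2) f assms(5), of u]
  unfolding second_difference_commute[of f x v u]
  by (rule tendsto_unique[OF trivial_limit_at_right_real])

lemma partial_deriv_eq_derivative:
  assumes "(f has_derivative Df) (at x)"
  shows "partial_deriv j f x = Df (axis j 1)"
proof -
  have "((\<lambda>t. x + t *\<^sub>R axis j 1) has_derivative (\<lambda>t. t *\<^sub>R axis j 1)) (at 0)"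
    by (auto intro!: derivative_eq_intros)
  with assms have "((\<lambda>t. f (x + t *\<^sub>R axis j 1)) has_derivative (\<lambda>t. Df (t *\<^sub>R axis j 1))) (at 0)"
    using has_derivative_compose by fastforce
  then have "((\<lambda>t. f (x + t *\<^sub>R axis j 1)) has_derivative (\<lambda>t. t *\<^sub>R Df (axis j 1))) (at 0)"
    by (simp add: linear_scale[OF has_derivative_linear[OF assms]])
  then show ?thesis
    unfolding partial_deriv_def has_vector_derivative_def[symmetric] by (rule vector_derivative_at)
qed

lemma has_derivative_vec_nth:
  "(f has_derivative f') F \<Longrightarrow> ((\<lambda>x. f x $ i) has_derivative (\<lambda>h. f' h $ i)) F"
  by (rule bounded_linear.has_derivative[OF bounded_linear_vec_nth])

lemma rotation_matrix_2_entries: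
  fixes Q :: "real^2^2"
  assumes "rotation_matrix Q"
  shows "Q$1$2 = - Q$2$1" "Q$2$2 = Q$1$1" "(Q$1$1)\<^sup>2 + (Q$2$1)\<^sup>2 = 1"
proof -
  have orth: "transpose Q ** Q = mat 1" and "det Q = 1"
    using assms by (auto simp: rotation_matrix_def orthogonal_matrix)
  have col1: "(Q$1$1)\<^sup>2 + (Q$2$1)\<^sup>2 = 1" and col2: "(Q$1$2)\<^sup>2 + (Q$2$2)\<^sup>2 = 1"
    using arg_cong[OF orth, of "\<lambda>M. M$1$1"] arg_cong[OF orth, of "\<lambda>M. M$2$2"]
    by (simp_all add: matrix_matrix_mult_def transpose_def mat_def sum_2 power2_eq_square)
  have "Q$1$1 * Q$2$2 - Q$1$2 * Q$2$1 = 1"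
    using \<open>det Q = 1\<close> by (simp add: det_2)
  with col1 col2 have "(Q$2$2 - Q$1$1)\<^sup>2 + (Q$1$2 + Q$2$1)\<^sup>2 = 0"
    by (simp add: power2_eq_square algebra_simps)
  then show "Q$1$2 = - Q$2$1" "Q$2$2 = Q$1$1"
    by (simp_all add: sum_power2_eq_zero_iff)
  show "(Q$1$1)\<^sup>2 + (Q$2$1)\<^sup>2 = 1" by (fact col1)
qed

lemma curl_mat_rotation_field:
  fixes R :: "real^2 \<Rightarrow> real^2^2"
  assumes "open S" "x \<in> S" and R: "(R has_derivative D) (at x)"
    and rot: "\<And>y. y \<in> S \<Longrightarrow> R y $ 1 $ 2 = - R y $ 2 $ 1 \<and> R y $ 2 $ 2 = R y $ 1 $ 1"
  shows "curl_mat R x $ 1 = - D (axis 1 1) $ 2 $ 1 - D (axis 2 1) $ 1 $ 1"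
    and "curl_mat R x $ 2 = D (axis 1 1) $ 1 $ 1 - D (axis 2 1) $ 2 $ 1"
proof -
  have entry: "((\<lambda>y. R y $ i $ j) has_derivative (\<lambda>h. D h $ i $ j)) (at x)" for i j
    by (intro has_derivative_vec_nth R)
  have "((\<lambda>y. R y $ 1 $ 2) has_derivative (\<lambda>h. - D h $ 2 $ 1)) (at x)"
    by (rule has_derivative_transform_within_open[OF has_derivative_minus[OF entry] assms(1,2)])
      (simp add: rot)
  moreover have "((\<lambda>y. R y $ 2 $ 2) has_derivative (\<lambda>h. D h $ 1 $ 1)) (at x)"
    by (rule has_derivative_transform_within_open[OF entry assms(1,2)]) (simp add: rot)
  ultimately show "curl_mat R x $ 1 = - D (axis 1 1) $ 2 $ 1 - D (axis 2 1) $ 1 $ 1"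
    and "curl_mat R x $ 2 = D (axis 1 1) $ 1 $ 1 - D (axis 2 1) $ 2 $ 1"
    unfolding curl_mat_def using partial_deriv_eq_derivative[OF entry[of 1 1]]
      partial_deriv_eq_derivative[OF entry[of 2 1]] partial_deriv_eq_derivative
    by simp_all
qed

lemma unit_circle_derivative_orthogonal:
  fixes a b :: "'a::real_normed_vector \<Rightarrow> real"
  assumes "open S" "x \<in> S" "\<And>y. y \<in> S \<Longrightarrow> (a y)\<^sup>2 + (b y)\<^sup>2 = 1"
    and "(a has_derivative Da) (at x)" "(b has_derivative Db) (at x)"
  shows "a x * Da h + b x * Db h = 0"
proof -
  have "((\<lambda>y. (a y)\<^sup>2 + (b y)\<^sup>2) has_derivative (\<lambda>h. 2 * (a x * Da h + b x * Db h))) (at x)"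
    using assms(4,5) by (auto intro!: derivative_eq_intros simp: algebra_simps)
  moreover have "((\<lambda>y. (a y)\<^sup>2 + (b y)\<^sup>2) has_derivative (\<lambda>h. 0)) (at x)"
    by (rule has_derivative_transform_within_open[OF has_derivative_const assms(1,2)])
      (simp add: assms(3))
  ultimately have "(\<lambda>h. 2 * (a x * Da h + b x * Db h)) = (\<lambda>h. 0)"
    by (rule has_derivative_unique)
  from fun_cong[OF this, of h] show ?thesis
    by simp
qed

lemma rotation_gradient_from_curl:
  fixes a b a1 a2 b1 b2 p q :: real
  assumes "a\<^sup>2 + b\<^sup>2 = 1" "a * a1 + b * b1 = 0" "a * a2 + b * b2 = 0"
    and "- b1 - a2 = p" "a1 - b2 = q"
  shows "a1 = b * (a * p + b * q)" "b1 = - a * (a * p + b * q)"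
    and "a2 = - b * (b * p - a * q)" "b2 = a * (b * p - a * q)"
  using assms by algebra+

lemma rotation_angular_velocity_curl_free:
  fixes a b w1 w2 :: "'a::real_normed_vector \<Rightarrow> real"
  assumes "open S" "x \<in> S"
    and a: "\<And>y. y \<in> S \<Longrightarrow> (a has_derivative Da y) (at y)"
    and b: "\<And>y. y \<in> S \<Longrightarrow> (b has_derivative Db y) (at y)"
    and rot: "\<And>y. y \<in> S \<Longrightarrow> Da y e1 = - b y * w1 y \<and> Db y e1 = a y * w1 y \<and>
                                Da y e2 = - b y * w2 y \<and> Db y e2 = a y * w2 y"
    and w1: "(w1 has_derivative W1) (at x)" and w2: "(w2 has_derivative W2) (at x)"
    and "(a x)\<^sup>2 + (b x)\<^sup>2 = 1"
  shows "W1 e2 = W2 e1"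
proof -
  have "((\<lambda>y. - b y * w1 y) has_derivative (\<lambda>h. - (Db x h * w1 x + b x * W1 h))) (at x)"
    and "((\<lambda>y. - b y * w2 y) has_derivative (\<lambda>h. - (Db x h * w2 x + b x * W2 h))) (at x)"
    and "((\<lambda>y. a y * w1 y) has_derivative (\<lambda>h. Da x h * w1 x + a x * W1 h)) (at x)"
    and "((\<lambda>y. a y * w2 y) has_derivative (\<lambda>h. Da x h * w2 x + a x * W2 h)) (at x)"
    using a[OF \<open>x \<in> S\<close>] b[OF \<open>x \<in> S\<close>] w1 w2
    by (auto intro!: derivative_eq_intros simp: algebra_simps)
  note products = this and transfer = has_derivative_transform_within_open[OF _ assms(1,2)]
  have "((\<lambda>y. Da y e1) has_derivative (\<lambda>h. - (Db x h * w1 x + b x * W1 h))) (at x)"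
    by (rule transfer[OF products(1)]) (simp add: rot)
  moreover have "((\<lambda>y. Da y e2) has_derivative (\<lambda>h. - (Db x h * w2 x + b x * W2 h))) (at x)"
    by (rule transfer[OF products(2)]) (simp add: rot)
  moreover have "((\<lambda>y. Db y e1) has_derivative (\<lambda>h. Da x h * w1 x + a x * W1 h)) (at x)"
    by (rule transfer[OF products(3)]) (simp add: rot)
  moreover have "((\<lambda>y. Db y e2) has_derivative (\<lambda>h. Da x h * w2 x + a x * W2 h)) (at x)"
    by (rule transfer[OF products(4)]) (simp add: rot)
  ultimately have "- (Db x e2 * w1 x + b x * W1 e2) = - (Db x e1 * w2 x + b x * W2 e1)"
    and "Da x e2 * w1 x + a x * W1 e2 = Da x e1 * w2 x + a x * W2 e1"
    by (auto intro: second_derivative_symmetric[OF assms(1,2) a]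
        second_derivative_symmetric[OF assms(1,2) b])
  with rot[OF \<open>x \<in> S\<close>] \<open>(a x)\<^sup>2 + (b x)\<^sup>2 = 1\<close> show ?thesis
    by algebra
qed

lemma rotation_field_constant_curl_zero:
  fixes a b :: "'a::real_normed_vector \<Rightarrow> real"
  assumes "open S" "x \<in> S"
    and a: "\<And>y. y \<in> S \<Longrightarrow> (a has_derivative Da y) (at y)"
    and b: "\<And>y. y \<in> S \<Longrightarrow> (b has_derivative Db y) (at y)"
    and grad: "\<And>y. y \<in> S \<Longrightarrow>
      Da y e1 = b y * (a y * p + b y * q) \<and> Db y e1 = - a y * (a y * p + b y * q) \<and>
      Da y e2 = - b y * (b y * p - a y * q) \<and> Db y e2 = a y * (b y * p - a y * q)"
    and unit: "(a x)\<^sup>2 + (b x)\<^sup>2 = 1"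
  shows "p = 0 \<and> q = 0"
proof -
  define w1 where "w1 y = - (a y * p + b y * q)" for y
  define w2 where "w2 y = b y * p - a y * q" for y
  have "(w1 has_derivative (\<lambda>h. - (Da x h * p + Db x h * q))) (at x)"
    and "(w2 has_derivative (\<lambda>h. Db x h * p - Da x h * q)) (at x)"
    unfolding w1_def[abs_def] w2_def[abs_def] using a[OF \<open>x \<in> S\<close>] b[OF \<open>x \<in> S\<close>]
    by (auto intro!: derivative_eq_intros)
  moreover have "Da y e1 = - b y * w1 y \<and> Db y e1 = a y * w1 y \<and>
      Da y e2 = - b y * w2 y \<and> Db y e2 = a y * w2 y" if "y \<in> S" for y
    using grad[OF that] by (simp add: w1_def w2_def algebra_simps)
  ultimately have "- (Da x e2 * p + Db x e2 * q) = Db x e1 * p - Da x e1 * q"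
    using rotation_angular_velocity_curl_free[OF assms(1,2) a b _ _ _ unit] by blast
  moreover have "(w1 x)\<^sup>2 + (w2 x)\<^sup>2 = - (Da x e2 * p + Db x e2 * q) - (Db x e1 * p - Da x e1 * q)"
    using grad[OF \<open>x \<in> S\<close>] unfolding w1_def w2_def by algebra
  ultimately have "(w1 x)\<^sup>2 + (w2 x)\<^sup>2 = 0"
    by simp
  then have "w1 x = 0" "w2 x = 0"
    by (simp_all add: sum_power2_eq_zero_iff)
  with unit show ?thesis
    unfolding w1_def w2_def by algebra
qed

lemma linear_eq_0_on_axes:
  fixes L :: "real^2 \<Rightarrow> real"
  assumes "linear L" "L (axis 1 1) = 0" "L (axis 2 1) = 0"
  shows "L = (\<lambda>h. 0)"
proof (rule linear_eq_stdbasis[OF assms(1) linear_zero])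
  fix e :: "real^2"
  assume "e \<in> Basis"
  then obtain i where "e = axis i 1"
    by (auto simp: Basis_vec_def)
  then show "L e = 0"
    using assms(2,3) exhaust_2[of i] by auto
qed

lemma rotation_field_constant_curl_imp_constant:
  fixes a b :: "real^2 \<Rightarrow> real"
  assumes "open S" "connected S" "x \<in> S" "y \<in> S"
    and a: "\<And>z. z \<in> S \<Longrightarrow> (a has_derivative Da z) (at z)"
    and b: "\<And>z. z \<in> S \<Longrightarrow> (b has_derivative Db z) (at z)"
    and unit: "\<And>z. z \<in> S \<Longrightarrow> (a z)\<^sup>2 + (b z)\<^sup>2 = 1"
    and curl: "\<And>z. z \<in> S \<Longrightarrow>
      - Db z (axis 1 1) - Da z (axis 2 1) = p \<and> Da z (axis 1 1) - Db z (axis 2 1) = q"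
  shows "a y = a x \<and> b y = b x"
proof -
  have grad: "Da z (axis 1 1) = b z * (a z * p + b z * q) \<and>
      Db z (axis 1 1) = - a z * (a z * p + b z * q) \<and>
      Da z (axis 2 1) = - b z * (b z * p - a z * q) \<and> Db z (axis 2 1) = a z * (b z * p - a z * q)"
    if "z \<in> S" for z
  proof -
    have orth: "a z * Da z h + b z * Db z h = 0" for h
      by (rule unit_circle_derivative_orthogonal[OF assms(1) that unit a[OF that] b[OF that]])
    from curl[OF that]
    have "- Db z (axis 1 1) - Da z (axis 2 1) = p" "Da z (axis 1 1) - Db z (axis 2 1) = q"
      by auto
    from rotation_gradient_from_curl[OF unit[OF that] orth orth this] show ?thesis
      by blast
  qed
  have "p = 0 \<and> q = 0"
    by (rule rotation_field_constant_curl_zero[OF assms(1,3) a b grad unit[OF assms(3)]])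
  have zero: "(a has_derivative (\<lambda>h. 0)) (at z) \<and> (b has_derivative (\<lambda>h. 0)) (at z)"
    if "z \<in> S" for z
  proof -
    have "Da z = (\<lambda>h. 0)" "Db z = (\<lambda>h. 0)"
      using grad[OF that] \<open>p = 0 \<and> q = 0\<close>
        has_derivative_linear[OF a[OF that]] has_derivative_linear[OF b[OF that]]
      by (simp_all add: linear_eq_0_on_axes)
    then show ?thesis
      using a[OF that] b[OF that] by simp
  qed
  show ?thesis
    using has_derivative_zero_unique_connected[OF assms(1,2) _ assms(4,3)] zero by blast
qed

theorem theorem3p1:
  fixes \<Omega> :: "(real^2) set" and R :: "real^2 \<Rightarrow> real^2^2" and \<alpha> :: "real^2"
  assumes "open \<Omega>" and "connected \<Omega>"
    and "C2_on \<Omega> R"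
    and "\<forall>x\<in>\<Omega>. rotation_matrix (R x)"
    and "\<forall>x\<in>\<Omega>. curl_mat R x = \<alpha>"
  shows "\<exists>C. \<forall>x\<in>\<Omega>. R x = C"
proof -
  obtain R' where R': "\<And>x. x \<in> \<Omega> \<Longrightarrow> (R has_derivative blinfun_apply (R' x)) (at x)"
    using assms(3) unfolding C2_on_def by blast
  have rot: "R y $ 1 $ 2 = - R y $ 2 $ 1 \<and> R y $ 2 $ 2 = R y $ 1 $ 1 \<and>
      (R y $ 1 $ 1)\<^sup>2 + (R y $ 2 $ 1)\<^sup>2 = 1"
    if "y \<in> \<Omega>" for y
    using rotation_matrix_2_entries assms(4) that by blast
  have curl: "- R' y (axis 1 1) $ 2 $ 1 - R' y (axis 2 1) $ 1 $ 1 = \<alpha> $ 1 \<and>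
      R' y (axis 1 1) $ 1 $ 1 - R' y (axis 2 1) $ 2 $ 1 = \<alpha> $ 2" if "y \<in> \<Omega>" for y
    using curl_mat_rotation_field[OF assms(1) that R'[OF that]] rot assms(5) that by auto
  have const: "R y $ 1 $ 1 = R x $ 1 $ 1 \<and> R y $ 2 $ 1 = R x $ 2 $ 1" if "x \<in> \<Omega>" "y \<in> \<Omega>" for x y
    by (rule rotation_field_constant_curl_imp_constant[OF assms(1,2) that
          has_derivative_vec_nth[OF has_derivative_vec_nth[OF R']]
          has_derivative_vec_nth[OF has_derivative_vec_nth[OF R']]])
      (simp_all add: rot curl)
  show ?thesis
  proof (cases "\<Omega> = {}")
    case False
    then obtain x where "x \<in> \<Omega>" by blast
    have "R y = R x" if "y \<in> \<Omega>" for y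
      using rot[OF that] rot[OF \<open>x \<in> \<Omega>\<close>] const[OF \<open>x \<in> \<Omega>\<close> that]
      by (simp add: vec_eq_iff forall_2)
    then show ?thesis by blast
  qed simp
qed

end
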